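(* Let $T_{26}=\mathbf{e}^1_1\otimes(\mathbf{e}^2_1\otimes\mathbf{e}^3_1+\mathbf{e}^2_2\otimes\mathbf{e}^3_3+\mathbf{e}^2_3\otimes\mathbf{e}^3_5)+\mathbf{e}^1_2\otimes(\mathbf{e}^2_1\otimes\mathbf{e}^3_2+\mathbf{e}^2_2\otimes\mathbf{e}^3_4+\mathbf{e}^2_3\otimes\mathbf{e}^3_6)\in\mathbb{C}^2\otimes\mathbb{C}^3\otimes\mathbb{C}^6$ and $g(\mathbf{x},\mathbf{y},\mathbf{z})=x_1y_1z_1+x_2y_1z_2+x_1y_2z_3+x_2y_2z_4+x_1y_3z_5+x_2y_3z_6$. Let $T\in\mathbb{C}^2\otimes\mathbb{C}^3\otimes\mathbb{C}^6$ and $(A,B,C)\in\mathrm{GL}_2\times\mathrm{GL}_3\times\mathrm{GL}_6$ with $(A,B,C)\cdot T=T_{26}$. Then a rank-one tensor $\mathbf{a}\otimes\mathbf{b}\otimes\mathbf{c}$ lies in the forbidden locus of $T$ if and only if $g(A\mathbf{a},B\mathbf{b},C\mathbf{c})=0$ (equivalently $\langle (A^T\otimes B^T\otimes C^T)\cdot T_{26}^*,\mathbf{a}\otimes\mathbf{b}\otimes\mathbf{c}\rangle=0$, where $T_{26}^*$ is $T_{26}$ written in the dual basis).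
   Context: $\mathbf{e}^i_j$ is the $j$-th standard basis vector of the $i$-th factor. The group acts by $(A,B,C)\cdot(\mathbf{a}\otimes\mathbf{b}\otimes\mathbf{c})=A\mathbf{a}\otimes B\mathbf{b}\otimes C\mathbf{c}$, extended linearly. The rank of a tensor is the minimal number of rank-one tensors summing to it; $P$ is in the forbidden locus of $T$ if $\mathrm{rk}(T-\lambda P)\ge\mathrm{rk}(T)$ for all $\lambda\in\mathbb{C}$. (Here $\mathrm{rk}(T)=6$.) *)

theory Defs
  imports "HOL-Analysis.Analysis"
begin

text \<open>The standard basis vector e_j (j = 1..n) of C^n is axis (j-1) 1, where the index type
  is the numeral type n with elements 0,...,n-1.\<close>

type_synonym ('a,'b,'c) tensor = "'a \<Rightarrow> 'b \<Rightarrow> 'c \<Rightarrow> complex"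

definition outer :: "complex^'a \<Rightarrow> complex^'b \<Rightarrow> complex^'c \<Rightarrow> ('a,'b,'c) tensor" where
  "outer a b c = (\<lambda>i j k. a $ i * b $ j * c $ k)"

definition tensor_rank :: "('a::finite,'b::finite,'c::finite) tensor \<Rightarrow> nat" where
  "tensor_rank T = (LEAST r. \<exists>a b c. T = (\<lambda>i j k. \<Sum>l<r. outer (a l) (b l) (c l) i j k))"

definition tensor_act ::
  "complex^'a^'a \<Rightarrow> complex^'b^'b \<Rightarrow> complex^'c^'c \<Rightarrow> ('a::finite,'b::finite,'c::finite) tensor
   \<Rightarrow> ('a,'b,'c) tensor" where
  "tensor_act A B C T = (\<lambda>i j k. \<Sum>i'\<in>UNIV. \<Sum>j'\<in>UNIV. \<Sum>k'\<in>UNIV.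
      A $ i $ i' * B $ j $ j' * C $ k $ k' * T i' j' k')"

definition forbidden_locus :: "('a::finite,'b::finite,'c::finite) tensor \<Rightarrow> ('a,'b,'c) tensor set" where
  "forbidden_locus T = {P. \<forall>t::complex. tensor_rank (\<lambda>i j k. T i j k - t * P i j k) \<ge> tensor_rank T}"

definition e :: "'n::finite \<Rightarrow> complex^'n" where
  "e i = axis i 1"

definition T26 :: "(2,3,6) tensor" where
  "T26 = (\<lambda>i j k. outer (e 0) (e 0) (e 0) i j k + outer (e 0) (e 1) (e 2) i j k
       + outer (e 0) (e 2) (e 4) i j k + outer (e 1) (e 0) (e 1) i j k
       + outer (e 1) (e 1) (e 3) i j k + outer (e 1) (e 2) (e 5) i j k)"

definition g26 :: "complex^2 \<Rightarrow> complex^3 \<Rightarrow> complex^6 \<Rightarrow> complex" where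
  "g26 x y z = x$0*y$0*z$0 + x$1*y$0*z$1 + x$0*y$1*z$2 + x$1*y$1*z$3 + x$0*y$2*z$4 + x$1*y$2*z$5"

end

theory Submission
  imports Defs
begin

text \<open>
  For a bijection enc between index pairs (i, j) and indices k, T26 is the tensor
  sum of e_i (x) e_j (x) e_enc(i,j), whose flattening (C^6)* -> C^2 (x) C^3 is an isomorphism,
  and g26 x y z = sum of x_i y_j z_enc(i,j). Rank is invariant under the group action, so it
  suffices to study T26 - t a (x) b (x) c. Its fibres e_enc(i,j) - t a_i b_j c span C^6 unless
  t g26 a b c = 1, so the rank stays at least 6 = rank T26. If g = g26 a b c is nonzero and
  t = 1/g, every slice of the difference along the third factor lies in the hyperplane
  {M. sum of c_enc(i,j) M_ij = 0} of 2 x 3 matrices, which misses a (x) b. That hyperplane is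
  spanned by the rank-one matrices it contains, hence by at most 5 of them, and the rank
  drops to at most 5.
\<close>

lemma sum_UNIV_prod: "(\<Sum>p\<in>UNIV. f p) = (\<Sum>i\<in>UNIV. \<Sum>j\<in>UNIV. f (i, j))"
  by (simp add: UNIV_Times_UNIV[symmetric] sum.cartesian_product' del: UNIV_Times_UNIV)

definition outer_sum ::
  "'p set \<Rightarrow> ('p \<Rightarrow> complex^'a) \<Rightarrow> ('p \<Rightarrow> complex^'b) \<Rightarrow> ('p \<Rightarrow> complex^'c) \<Rightarrow> ('a,'b,'c) tensor" where
  "outer_sum L a b c = (\<lambda>i j k. \<Sum>l\<in>L. outer (a l) (b l) (c l) i j k)"

lemma tensor_rank_def': "tensor_rank T = (LEAST r. \<exists>a b c. T = outer_sum {..<r} a b c)"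
  by (simp add: tensor_rank_def outer_sum_def)

lemma outer_sum_reindex:
  assumes "finite L"
  obtains a' b' c' where "outer_sum L a b c = outer_sum {..<card L} a' b' c'"
proof -
  obtain h where h: "bij_betw h {..<card L} L"
    using ex_bij_betw_nat_finite assms lessThan_atLeast0 by metis
  have "outer_sum L a b c = outer_sum {..<card L} (a \<circ> h) (b \<circ> h) (c \<circ> h)"
    unfolding outer_sum_def by (simp add: sum.reindex_bij_betw[OF h, symmetric])
  then show thesis by (rule that)
qed

lemma tensor_rank_outer_sum_le:
  "finite L \<Longrightarrow> tensor_rank (outer_sum L a b c) \<le> card L"
  unfolding tensor_rank_def' by (metis (mono_tags) Least_le outer_sum_reindex)

definition fiber :: "('a,'b,'c) tensor \<Rightarrow> 'a \<times> 'b \<Rightarrow> complex^'c" where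
  "fiber X p = (\<chi> k. X (fst p) (snd p) k)"

lemma outer_sum_fibers:
  fixes X :: "('a::finite,'b::finite,'c::finite) tensor"
  shows "X = outer_sum UNIV (\<lambda>p. axis (fst p) 1) (\<lambda>p. axis (snd p) 1) (fiber X)"
proof (intro ext)
  fix i j k
  have "outer_sum UNIV (\<lambda>p. axis (fst p) 1) (\<lambda>p. axis (snd p) 1) (fiber X) i j k
      = (\<Sum>p\<in>UNIV. if p = (i, j) then X i j k else 0)"
    unfolding outer_sum_def by (intro sum.cong) (auto simp: outer_def axis_def fiber_def)
  then show "X i j k = outer_sum UNIV (\<lambda>p. axis (fst p) 1) (\<lambda>p. axis (snd p) 1) (fiber X) i j k"
    by simp
qed

lemma tensor_rank_decomposition:
  fixes X :: "('a::finite,'b::finite,'c::finite) tensor"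
  obtains a b c where "X = outer_sum {..<tensor_rank X} a b c"
proof -
  obtain a b c where "X = outer_sum {..<CARD('a \<times> 'b)} a b c"
    using outer_sum_fibers[of X] outer_sum_reindex[of UNIV] by (metis finite)
  then have "\<exists>(r::nat) a b c. X = outer_sum {..<r} a b c" by blast
  then have "\<exists>a b c. X = outer_sum {..<tensor_rank X} a b c"
    unfolding tensor_rank_def' by (rule LeastI_ex)
  then show thesis
    using that by blast
qed

lemma tensor_rank_le_card:
  fixes X :: "('a::finite,'b::finite,'c::finite) tensor"
  shows "tensor_rank X \<le> CARD('a \<times> 'b)"
  using tensor_rank_outer_sum_le[of UNIV] outer_sum_fibers[of X] by (metis finite)

lemma tensor_act_triple_sum:
  "tensor_act A B C X i j k =
    (\<Sum>p\<in>UNIV. A$i$fst p * B$j$fst (snd p) * C$k$snd (snd p) * X (fst p) (fst (snd p)) (snd (snd p)))"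
  by (simp add: tensor_act_def sum_UNIV_prod)

lemma tensor_act_sum:
  "tensor_act A B C (\<lambda>i j k. \<Sum>l\<in>L. X l i j k) = (\<lambda>i j k. \<Sum>l\<in>L. tensor_act A B C (X l) i j k)"
  unfolding tensor_act_triple_sum by (simp add: sum_distrib_left sum.swap[of _ UNIV L])

lemma tensor_act_outer: "tensor_act A B C (outer a b c) = outer (A *v a) (B *v b) (C *v c)"
proof (intro ext)
  fix i j k
  have "tensor_act A B C (outer a b c) i j k
      = (\<Sum>i'\<in>UNIV. \<Sum>j'\<in>UNIV. \<Sum>k'\<in>UNIV. A$i$i' * B$j$j' * C$k$k' * (a$i' * b$j' * c$k'))"
    by (simp only: tensor_act_def outer_def)
  also have "\<dots> = (\<Sum>i'\<in>UNIV. A$i$i' * a$i' * (\<Sum>j'\<in>UNIV. B$j$j' * b$j' * (\<Sum>k'\<in>UNIV. C$k$k' * c$k')))"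
    by (simp add: sum_distrib_left mult_ac)
  also have "\<dots> = (\<Sum>i'\<in>UNIV. A$i$i' * a$i') * (\<Sum>j'\<in>UNIV. B$j$j' * b$j') * (\<Sum>k'\<in>UNIV. C$k$k' * c$k')"
    by (simp add: sum_distrib_right mult.assoc)
  also have "\<dots> = outer (A *v a) (B *v b) (C *v c) i j k"
    by (simp only: outer_def matrix_vector_mult_def vec_lambda_beta)
  finally show "tensor_act A B C (outer a b c) i j k = outer (A *v a) (B *v b) (C *v c) i j k" .
qed

lemma tensor_act_outer_sum:
  "tensor_act A B C (outer_sum L a b c) = outer_sum L (\<lambda>l. A *v a l) (\<lambda>l. B *v b l) (\<lambda>l. C *v c l)"
  unfolding outer_sum_def tensor_act_sum by (simp add: tensor_act_outer)

lemma tensor_act_comp: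
  fixes X :: "('a::finite,'b::finite,'c::finite) tensor"
  shows "tensor_act A' B' C' (tensor_act A B C X) = tensor_act (A' ** A) (B' ** B) (C' ** C) X"
  by (subst (1 2) outer_sum_fibers[of X]) (simp add: tensor_act_outer_sum matrix_vector_mul_assoc)

lemma tensor_act_id: "tensor_act (mat 1) (mat 1) (mat 1) X = X"
  by (subst (1 2) outer_sum_fibers[of X]) (simp add: tensor_act_outer_sum)

lemma tensor_rank_tensor_act_le: "tensor_rank (tensor_act A B C X) \<le> tensor_rank X"
proof -
  define r where "r = tensor_rank X"
  obtain a b c where "X = outer_sum {..<r} a b c"
    unfolding r_def by (rule tensor_rank_decomposition)
  then have "tensor_act A B C X = outer_sum {..<r} (\<lambda>l. A *v a l) (\<lambda>l. B *v b l) (\<lambda>l. C *v c l)"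
    by (simp add: tensor_act_outer_sum)
  then show ?thesis
    unfolding r_def[symmetric] using tensor_rank_outer_sum_le[of "{..<r}"] by simp
qed

lemma tensor_rank_tensor_act:
  assumes "invertible A" "invertible B" "invertible C"
  shows "tensor_rank (tensor_act A B C X) = tensor_rank X"
proof -
  obtain A' B' C' where "A' ** A = mat 1" "B' ** B = mat 1" "C' ** C = mat 1"
    using assms invertible_def by metis
  then have "tensor_act A' B' C' (tensor_act A B C X) = X"
    by (simp add: tensor_act_comp tensor_act_id)
  then show ?thesis
    by (metis antisym tensor_rank_tensor_act_le)
qed

lemma tensor_act_diff:
  "tensor_act A B C (\<lambda>i j k. X i j k - t * Y i j k)
     = (\<lambda>i j k. tensor_act A B C X i j k - t * tensor_act A B C Y i j k)"
  by (simp add: tensor_act_def right_diff_distrib sum_subtractf sum_distrib_left mult_ac)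

section \<open>Flattening bounds\<close>

lemma dim_fibers_le_tensor_rank:
  fixes X :: "('a::finite,'b::finite,'c::finite) tensor"
  shows "vec.dim (range (fiber X)) \<le> tensor_rank X"
proof -
  define r where "r = tensor_rank X"
  obtain a b c where X: "X = outer_sum {..<r} a b c"
    unfolding r_def by (rule tensor_rank_decomposition)
  have "fiber X p = (\<Sum>l<r. (a l $ fst p * b l $ snd p) *s c l)" for p
    by (simp add: X fiber_def outer_sum_def outer_def vec_eq_iff mult.assoc)
  then have "range (fiber X) \<subseteq> vec.span (c ` {..<r})"
    by (auto intro!: vec.span_sum vec.span_scale intro: vec.span_base)
  then have "vec.dim (range (fiber X)) \<le> card (c ` {..<r})"
    by (rule vec.dim_le_card) simp
  also have "\<dots> \<le> r"
    using card_image_le[of "{..<r}" c] by simp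
  finally show ?thesis unfolding r_def .
qed

definition slice :: "('a::finite,'b::finite,'c) tensor \<Rightarrow> 'c \<Rightarrow> complex^('a \<times> 'b)" where
  "slice X k = (\<chi> p. X (fst p) (snd p) k)"

definition rank_one_mat :: "complex^'a::finite \<Rightarrow> complex^'b::finite \<Rightarrow> complex^('a \<times> 'b)" where
  "rank_one_mat u w = (\<chi> p. u $ fst p * w $ snd p)"

lemma tensor_rank_le_dim_slices:
  fixes X :: "('a::finite,'b::finite,'c::finite) tensor"
  assumes slices: "\<And>k. slice X k \<in> vec.span R"
    and rank_one: "\<And>M. M \<in> R \<Longrightarrow> \<exists>u w. M = rank_one_mat u w"
  shows "tensor_rank X \<le> vec.dim R"
proof -
  obtain B where B: "B \<subseteq> R" "vec.independent B" "R \<subseteq> vec.span B" "card B = vec.dim R"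
    by (rule vec.basis_exists)
  have "finite B"
    using B(2) by (rule vec.finiteI_independent)
  have "slice X k \<in> vec.span B" for k
    using slices B(3) vec.span_mono vec.span_span by blast
  then have "\<forall>k. \<exists>U. slice X k = (\<Sum>m\<in>B. U m *s m)"
    using vec.span_finite[OF \<open>finite B\<close>] by blast
  then obtain U where U: "\<And>k. slice X k = (\<Sum>m\<in>B. U k m *s m)"
    by metis
  obtain u w where uw: "\<And>m. m \<in> B \<Longrightarrow> m = rank_one_mat (u m) (w m)"
    using rank_one B(1) by (metis subsetD)
  have "X = outer_sum B u w (\<lambda>m. \<chi> k. U k m)"
  proof (intro ext)
    fix i j k
    have "X i j k = slice X k $ (i, j)"
      by (simp add: slice_def)
    also have "\<dots> = (\<Sum>m\<in>B. U k m * m $ (i, j))"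
      by (simp add: U)
    also have "\<dots> = outer_sum B u w (\<lambda>m. \<chi> k. U k m) i j k"
      unfolding outer_sum_def
      by (intro sum.cong refl) (subst uw, auto simp: rank_one_mat_def outer_def)
    finally show "X i j k = outer_sum B u w (\<lambda>m. \<chi> k. U k m) i j k" .
  qed
  then show ?thesis
    using tensor_rank_outer_sum_le[OF \<open>finite B\<close>, of u w] B(4) by simp
qed

section \<open>Hyperplanes of matrices\<close>

definition pairing :: "complex^'n::finite \<Rightarrow> complex^'n \<Rightarrow> complex" where
  "pairing K M = (\<Sum>p\<in>UNIV. K $ p * M $ p)"

lemma pairing_add: "pairing K (M + N) = pairing K M + pairing K N"
  by (simp add: pairing_def distrib_left sum.distrib)

lemma pairing_diff: "pairing K (M - N) = pairing K M - pairing K N"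
  by (simp add: pairing_def right_diff_distrib sum_subtractf)

lemma pairing_scale: "pairing K (s *s M) = s * pairing K M"
  by (simp add: pairing_def sum_distrib_left mult_ac)

lemma subspace_pairing_kernel: "vec.subspace {M. pairing K M = 0}"
  unfolding vec.subspace_def by (simp add: pairing_add pairing_scale pairing_def[of K 0])

lemma rank_one_mat_add_left: "rank_one_mat (u + v) w = rank_one_mat u w + rank_one_mat v w"
  by (simp add: rank_one_mat_def vec_eq_iff distrib_right)

lemma rank_one_mat_add_right: "rank_one_mat u (w + v) = rank_one_mat u w + rank_one_mat u v"
  by (simp add: rank_one_mat_def vec_eq_iff distrib_left)

lemma rank_one_mat_diff_left: "rank_one_mat (u - v) w = rank_one_mat u w - rank_one_mat v w"
  by (simp add: rank_one_mat_def vec_eq_iff left_diff_distrib)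

lemma rank_one_mat_diff_right: "rank_one_mat u (w - v) = rank_one_mat u w - rank_one_mat u v"
  by (simp add: rank_one_mat_def vec_eq_iff right_diff_distrib)

lemma rank_one_mat_scale_left: "rank_one_mat (s *s u) w = s *s rank_one_mat u w"
  by (simp add: rank_one_mat_def vec_eq_iff mult.assoc)

lemma rank_one_mat_scale_right: "rank_one_mat u (s *s w) = s *s rank_one_mat u w"
  by (simp add: rank_one_mat_def vec_eq_iff mult_ac)

lemma rank_one_mat_axis: "rank_one_mat (axis i 1) (axis j 1) = axis (i, j) 1"
  by (simp add: rank_one_mat_def vec_eq_iff axis_def)

lemma rank_one_mat_correction_in_span:
  fixes K :: "complex^('a::finite \<times> 'b::finite)"
  defines "\<beta> u w \<equiv> pairing K (rank_one_mat u w)"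
  assumes g: "\<beta> a b \<noteq> 0"
  shows "rank_one_mat u w - (\<beta> u w / \<beta> a b) *s rank_one_mat a b
           \<in> vec.span {rank_one_mat x y | x y. \<beta> x y = 0}"
proof -
  define g where "g = \<beta> a b"
  define \<rho> where "\<rho> = \<beta> u b / g"
  define \<sigma> where "\<sigma> = \<beta> a w / g"
  define x where "x = u - \<rho> *s a"
  define y where "y = w - \<sigma> *s b"
  define s where "s = - \<beta> x y / g"
  \<comment> \<open>\<open>x\<close>, \<open>y\<close> and \<open>s\<close> are chosen to make \<open>x \<otimes> b\<close>, \<open>a \<otimes> y\<close> and \<open>(x + a) \<otimes> (y + s b)\<close> orthogonal to \<open>K\<close>.\<close>
  have \<beta>_x: "\<beta> x b = 0" and \<beta>_y: "\<beta> a y = 0"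
    using g by (simp_all add: \<beta>_def x_def y_def \<rho>_def \<sigma>_def g_def rank_one_mat_diff_left
        rank_one_mat_diff_right rank_one_mat_scale_left rank_one_mat_scale_right pairing_diff pairing_scale)
  have "\<beta> x y = \<beta> u w - \<sigma> * \<beta> u b - \<rho> * (\<beta> a w - \<sigma> * g)"
    by (simp add: \<beta>_def x_def y_def g_def rank_one_mat_diff_left rank_one_mat_diff_right
        rank_one_mat_scale_left rank_one_mat_scale_right pairing_add pairing_diff pairing_scale algebra_simps)
  also have "\<dots> = \<beta> u w - \<rho> * \<sigma> * g"
    using g by (simp add: \<rho>_def \<sigma>_def g_def field_simps)
  finally have s_eq: "s = \<rho> * \<sigma> - \<beta> u w / g"
    using g by (simp add: s_def g_def field_simps)
  have "\<beta> (x + a) (y + s *s b) = \<beta> x y + s * \<beta> x b + \<beta> a y + s * g"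
    by (simp add: \<beta>_def g_def rank_one_mat_add_left rank_one_mat_add_right rank_one_mat_scale_right
        pairing_add pairing_scale)
  then have \<beta>_xy: "\<beta> (x + a) (y + s *s b) = 0"
    using g by (simp add: \<beta>_x \<beta>_y s_def g_def)
  have "rank_one_mat u w - (\<beta> u w / g) *s rank_one_mat a b
      = rank_one_mat (x + a) (y + s *s b) + (\<sigma> - s) *s rank_one_mat x b + (\<rho> - 1) *s rank_one_mat a y"
    by (simp add: vec_eq_iff rank_one_mat_def x_def y_def s_eq algebra_simps add_divide_distrib)
  moreover have "\<dots> \<in> vec.span {rank_one_mat x y | x y. \<beta> x y = 0}"
    using \<beta>_x \<beta>_y \<beta>_xy by (blast intro: vec.span_add vec.span_scale vec.span_base)
  ultimately show ?thesis
    unfolding g_def by simp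
qed

lemma pairing_axis: "pairing K (axis p 1) = K $ p"
proof -
  have "pairing K (axis p 1) = (\<Sum>q\<in>UNIV. if q = p then K $ q else 0)"
    unfolding pairing_def axis_def by (intro sum.cong) auto
  then show ?thesis by simp
qed

lemma pairing_kernel_subset_span_rank_one:
  fixes K :: "complex^('a::finite \<times> 'b::finite)"
  assumes "K \<noteq> 0"
  shows "{M. pairing K M = 0} \<subseteq> vec.span {rank_one_mat x y | x y. pairing K (rank_one_mat x y) = 0}"
    (is "_ \<subseteq> vec.span ?R")
proof
  fix M assume "M \<in> {M. pairing K M = 0}"
  then have M: "pairing K M = 0" by simp
  obtain p0 where "K $ p0 \<noteq> 0"
    using assms by (auto simp: vec_eq_iff)
  define a where "a = axis (fst p0) (1::complex)"
  define b where "b = axis (snd p0) (1::complex)"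
  define g where "g = pairing K (rank_one_mat a b)"
  have g: "g \<noteq> 0"
    using \<open>K $ p0 \<noteq> 0\<close> by (simp add: g_def a_def b_def rank_one_mat_axis pairing_axis)
  have "(\<Sum>p\<in>UNIV. M $ p *s (axis p 1 - (K $ p / g) *s rank_one_mat a b))
      = (\<Sum>p\<in>UNIV. M $ p *s axis p 1) - (pairing K M / g) *s rank_one_mat a b"
    by (simp add: vec_eq_iff pairing_def right_diff_distrib sum_subtractf sum_distrib_left
        divide_inverse mult_ac)
  also have "\<dots> = M"
    by (simp add: M basis_expansion)
  finally have "M = (\<Sum>p\<in>UNIV. M $ p *s (rank_one_mat (axis (fst p) 1) (axis (snd p) 1)
      - (pairing K (rank_one_mat (axis (fst p) 1) (axis (snd p) 1)) / g) *s rank_one_mat a b))"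
    by (simp add: rank_one_mat_axis pairing_axis)
  also have "\<dots> \<in> vec.span ?R"
    using rank_one_mat_correction_in_span[of K a b] g
    by (intro vec.span_sum vec.span_scale) (simp add: g_def)
  finally show "M \<in> vec.span ?R" .
qed

lemma dim_rank_one_kernel_less:
  fixes K :: "complex^('a::finite \<times> 'b::finite)"
  assumes "K \<noteq> 0"
  shows "vec.dim {rank_one_mat x y | x y. pairing K (rank_one_mat x y) = 0} < CARD('a \<times> 'b)"
    (is "vec.dim ?R < _")
proof -
  obtain p0 where "K $ p0 \<noteq> 0"
    using assms by (auto simp: vec_eq_iff)
  have "vec.span ?R \<subseteq> {M. pairing K M = 0}"
    by (intro vec.span_minimal subspace_pairing_kernel) auto
  then have "axis p0 1 \<notin> vec.span ?R"
    using \<open>K $ p0 \<noteq> 0\<close> by (auto simp: pairing_axis)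
  then have "vec.span ?R \<subset> vec.span UNIV"
    by (auto simp: vec.span_UNIV)
  then have "vec.dim ?R < vec.dim (UNIV :: (complex^('a \<times> 'b)) set)"
    by (rule vec.dim_psubset)
  then show ?thesis
    by (simp only: vec_dim_card)
qed

lemma tensor_rank_less_if_slices_in_kernel:
  fixes X :: "('a::finite,'b::finite,'c::finite) tensor"
  assumes "K \<noteq> 0" and "\<And>k. pairing K (slice X k) = 0"
  shows "tensor_rank X < CARD('a \<times> 'b)"
proof -
  have "tensor_rank X \<le> vec.dim {rank_one_mat x y | x y. pairing K (rank_one_mat x y) = 0}"
    using assms pairing_kernel_subset_span_rank_one[of K]
    by (intro tensor_rank_le_dim_slices) auto
  also have "\<dots> < CARD('a \<times> 'b)"
    using assms(1) by (rule dim_rank_one_kernel_less)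
  finally show ?thesis .
qed

section \<open>Tensors with an invertible flattening\<close>

definition flat_tensor :: "('a \<times> 'b \<Rightarrow> 'c) \<Rightarrow> ('a,'b,'c) tensor" where
  "flat_tensor enc i j k = (if k = enc (i, j) then 1 else 0)"

definition flat_form ::
  "('a::finite \<times> 'b::finite \<Rightarrow> 'c) \<Rightarrow> complex^'a \<Rightarrow> complex^'b \<Rightarrow> complex^'c \<Rightarrow> complex" where
  "flat_form enc x y z = (\<Sum>p\<in>UNIV. x $ fst p * y $ snd p * z $ enc p)"

lemma sum_bij_delta:
  fixes enc :: "'p::finite \<Rightarrow> 'c::finite"
  assumes "bij enc"
  shows "(\<Sum>p\<in>UNIV. if k = enc p then f (enc p) else 0) = f k"
  using sum.reindex_bij_betw[OF assms, of "\<lambda>q. if k = q then f q else 0"] by simp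

lemma span_fibers_flat_tensor_minus:
  fixes enc :: "'a::finite \<times> 'b::finite \<Rightarrow> 'c::finite"
  assumes "bij enc" and "1 - t * flat_form enc a b c \<noteq> 0"
  shows "vec.span (range (fiber (\<lambda>i j k. flat_tensor enc i j k - t * outer a b c i j k))) = UNIV"
    (is "?V = UNIV")
proof -
  let ?X = "\<lambda>i j k. flat_tensor enc i j k - t * outer a b c i j k"
  define \<gamma> where "\<gamma> = 1 - t * flat_form enc a b c"
  have fiber: "fiber ?X p = axis (enc p) 1 - (t * a $ fst p * b $ snd p) *s c" for p
    by (auto simp: fiber_def flat_tensor_def outer_def vec_eq_iff axis_def mult.assoc)
  have "(\<Sum>p\<in>UNIV. c $ enc p *s fiber ?X p)
      = (\<Sum>p\<in>UNIV. c $ enc p *s axis (enc p) 1) - (\<Sum>p\<in>UNIV. (c $ enc p * (t * a $ fst p * b $ snd p)) *s c)"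
    by (simp add: fiber sum_subtractf vector_smult_assoc)
  also have "(\<Sum>p\<in>UNIV. c $ enc p *s axis (enc p) 1) = c"
    using sum.reindex_bij_betw[OF assms(1), of "\<lambda>k. c $ k *s axis k 1"] by (simp add: basis_expansion)
  also have "(\<Sum>p\<in>UNIV. (c $ enc p * (t * a $ fst p * b $ snd p)) *s c) = (t * flat_form enc a b c) *s c"
    by (simp add: flat_form_def vec.scale_sum_left sum_distrib_left mult_ac)
  finally have "(\<Sum>p\<in>UNIV. c $ enc p *s fiber ?X p) = \<gamma> *s c"
    by (simp add: \<gamma>_def algebra_simps)
  then have "c = (1 / \<gamma>) *s (\<Sum>p\<in>UNIV. c $ enc p *s fiber ?X p)"
    using assms(2) by (simp add: \<gamma>_def[symmetric])
  also have "\<dots> \<in> ?V"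
    by (intro vec.span_scale vec.span_sum vec.span_base) auto
  finally have "c \<in> ?V" .
  have axis_enc: "axis (enc p) 1 \<in> ?V" for p
  proof -
    have "axis (enc p) 1 = fiber ?X p + (t * a $ fst p * b $ snd p) *s c"
      by (simp add: fiber)
    also have "\<dots> \<in> ?V"
      using \<open>c \<in> ?V\<close> by (auto intro!: vec.span_add vec.span_scale intro: vec.span_base)
    finally show ?thesis .
  qed
  have "axis k 1 \<in> ?V" for k
    using axis_enc[of "inv enc k"] assms(1) by (simp add: bij_is_surj surj_f_inv_f)
  then have "x \<in> ?V" for x
    by (subst basis_expansion[of x, symmetric]) (intro vec.span_sum vec.span_scale)
  then show ?thesis
    by blast
qed

lemma tensor_rank_flat_tensor_minus_ge:
  fixes enc :: "'a::finite \<times> 'b::finite \<Rightarrow> 'c::finite"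
  assumes "bij enc" and "1 - t * flat_form enc a b c \<noteq> 0"
  shows "CARD('c) \<le> tensor_rank (\<lambda>i j k. flat_tensor enc i j k - t * outer a b c i j k)"
    (is "_ \<le> tensor_rank ?X")
proof -
  have "CARD('c) = vec.dim (vec.span (range (fiber ?X)))"
    unfolding span_fibers_flat_tensor_minus[OF assms] by (simp only: vec_dim_card)
  also have "\<dots> = vec.dim (range (fiber ?X))"
    by (rule vec.dim_span)
  also have "\<dots> \<le> tensor_rank ?X"
    by (rule dim_fibers_le_tensor_rank)
  finally show ?thesis .
qed

lemma tensor_rank_flat_tensor:
  fixes enc :: "'a::finite \<times> 'b::finite \<Rightarrow> 'c::finite"
  assumes "bij enc"
  shows "tensor_rank (flat_tensor enc) = CARD('c)"
proof (rule antisym)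
  show "tensor_rank (flat_tensor enc) \<le> CARD('c)"
    using tensor_rank_le_card[of "flat_tensor enc"] bij_betw_same_card[OF assms] by simp
  show "CARD('c) \<le> tensor_rank (flat_tensor enc)"
    using tensor_rank_flat_tensor_minus_ge[OF assms, of 0] by simp
qed

lemma tensor_rank_flat_tensor_minus_less:
  fixes enc :: "'a::finite \<times> 'b::finite \<Rightarrow> 'c::finite"
  assumes "bij enc" and "flat_form enc a b c \<noteq> 0"
  shows "tensor_rank (\<lambda>i j k. flat_tensor enc i j k - (1 / flat_form enc a b c) * outer a b c i j k)
           < CARD('c)"
    (is "tensor_rank ?X < _")
proof -
  define g where "g = flat_form enc a b c"
  define K where "K = (\<chi> p. c $ enc p)"
  have "K \<noteq> 0"
  proof
    assume "K = 0"
    then have "c $ enc p = 0" for p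
      by (metis K_def vec_lambda_beta zero_index)
    then show False
      using assms(2) by (simp add: flat_form_def)
  qed
  moreover have "pairing K (slice ?X k) = 0" for k
  proof -
    have "pairing K (slice ?X k)
        = (\<Sum>p\<in>UNIV. (if k = enc p then c $ enc p else 0) - c $ k / g * (a $ fst p * b $ snd p * c $ enc p))"
      unfolding pairing_def slice_def K_def flat_tensor_def outer_def g_def
      by (intro sum.cong) (auto simp: algebra_simps)
    also have "\<dots> = (\<Sum>p\<in>UNIV. if k = enc p then c $ enc p else 0) - c $ k / g * g"
      by (simp add: sum_subtractf sum_distrib_left flat_form_def g_def)
    also have "\<dots> = 0"
      using assms by (simp add: sum_bij_delta g_def)
    finally show ?thesis .
  qed
  ultimately have "tensor_rank ?X < CARD('a \<times> 'b)"
    by (rule tensor_rank_less_if_slices_in_kernel)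
  then show ?thesis
    using bij_betw_same_card[OF assms(1)] by simp
qed

theorem forbidden_locus_flat_tensor_iff:
  fixes enc :: "'a::finite \<times> 'b::finite \<Rightarrow> 'c::finite"
  assumes "bij enc" and "invertible A" "invertible B" "invertible C"
    and "tensor_act A B C T = flat_tensor enc"
  shows "outer a b c \<in> forbidden_locus T \<longleftrightarrow> flat_form enc (A *v a) (B *v b) (C *v c) = 0"
proof -
  define g where "g = flat_form enc (A *v a) (B *v b) (C *v c)"
  have rank_shift: "tensor_rank (\<lambda>i j k. T i j k - t * outer a b c i j k)
      = tensor_rank (\<lambda>i j k. flat_tensor enc i j k - t * outer (A *v a) (B *v b) (C *v c) i j k)" for t
    using tensor_rank_tensor_act[OF assms(2-4), of "\<lambda>i j k. T i j k - t * outer a b c i j k"]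
    by (simp add: tensor_act_diff tensor_act_outer assms(5))
  have rank_T: "tensor_rank T = CARD('c)"
    using tensor_rank_tensor_act[OF assms(2-4), of T] assms(5) tensor_rank_flat_tensor[OF assms(1)]
    by simp
  show ?thesis
  proof (cases "g = 0")
    case True
    then show ?thesis
      using tensor_rank_flat_tensor_minus_ge[OF assms(1)]
      by (simp add: forbidden_locus_def rank_shift rank_T g_def)
  next
    case False
    have "tensor_rank (\<lambda>i j k. T i j k - (1 / g) * outer a b c i j k)
        = tensor_rank (\<lambda>i j k. flat_tensor enc i j k - (1 / g) * outer (A *v a) (B *v b) (C *v c) i j k)"
      by (rule rank_shift)
    also have "\<dots> < tensor_rank T"
      unfolding rank_T g_def using False[unfolded g_def] by (rule tensor_rank_flat_tensor_minus_less[OF assms(1)])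
    finally have "tensor_rank (\<lambda>i j k. T i j k - (1 / g) * outer a b c i j k) < tensor_rank T" .
    then have "outer a b c \<notin> forbidden_locus T"
      unfolding forbidden_locus_def by (blast dest: leD)
    then show ?thesis
      using False by (simp add: g_def)
  qed
qed

definition enc26 :: "2 \<times> 3 \<Rightarrow> 6" where
  "enc26 p = (if fst p = 0 then (if snd p = 0 then 0 else if snd p = 1 then 2 else 4)
              else (if snd p = 0 then 1 else if snd p = 1 then 3 else 5))"

lemma UNIV_2_zero: "(UNIV :: 2 set) = {0, 1}"
  using UNIV_2 by auto

lemma UNIV_3_zero: "(UNIV :: 3 set) = {0, 1, 2}"
  using UNIV_3 by auto

lemma UNIV_6_zero: "(UNIV :: 6 set) = {0, 1, 2, 3, 4, 5}"
proof -
  have "card {0, 1, 2, 3, 4, 5 :: 6} = CARD(6)"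
    by simp
  then show ?thesis
    by (intro card_subset_eq[symmetric]) auto
qed

lemma bij_enc26: "bij enc26"
proof -
  have enc26_values: "enc26 (0, 0) = 0" "enc26 (1, 0) = 1" "enc26 (0, 1) = 2"
    "enc26 (1, 1) = 3" "enc26 (0, 2) = 4" "enc26 (1, 2) = 5"
    by (simp_all add: enc26_def)
  have "k \<in> range enc26" for k
    using UNIV_6_zero enc26_values by (metis empty_iff insert_iff iso_tuple_UNIV_I rangeI)
  then have "surj enc26"
    by blast
  moreover from this have "inj enc26"
    by (simp add: inj_on_iff_eq_card)
  ultimately show ?thesis
    by (simp add: bij_def)
qed

lemma T26_eq_flat_tensor: "T26 = flat_tensor enc26"
proof (intro ext)
  fix i :: 2 and j :: 3 and k :: 6
  have "i = 0 \<or> i = 1" "j = 0 \<or> j = 1 \<or> j = 2"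
    using UNIV_2_zero UNIV_3_zero by auto
  then show "T26 i j k = flat_tensor enc26 i j k"
    by (elim disjE) (simp_all add: T26_def flat_tensor_def enc26_def outer_def e_def axis_def)
qed

lemma g26_eq_flat_form: "g26 = flat_form enc26"
proof (intro ext)
  fix x :: "complex^2" and y :: "complex^3" and z :: "complex^6"
  have "flat_form enc26 x y z = (\<Sum>i\<in>{0, 1}. \<Sum>j\<in>{0, 1, 2}. x $ i * y $ j * z $ enc26 (i, j))"
    by (simp only: flat_form_def sum_UNIV_prod UNIV_2_zero UNIV_3_zero fst_conv snd_conv)
  then show "g26 x y z = flat_form enc26 x y z"
    by (simp add: g26_def enc26_def algebra_simps)
qed

theorem proposition6p16:
  fixes T :: "(2,3,6) tensor"
    and A :: "complex^2^2" and B :: "complex^3^3" and C :: "complex^6^6"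
    and a :: "complex^2" and b :: "complex^3" and c :: "complex^6"
  assumes "invertible A" and "invertible B" and "invertible C"
    and "tensor_act A B C T = T26"
    and "a \<noteq> 0" and "b \<noteq> 0" and "c \<noteq> 0"
  shows "outer a b c \<in> forbidden_locus T \<longleftrightarrow> g26 (A *v a) (B *v b) (C *v c) = 0"
  unfolding g26_eq_flat_form
  by (rule forbidden_locus_flat_tensor_iff[OF bij_enc26 assms(1-3) assms(4)[unfolded T26_eq_flat_tensor]])

end
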